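(* Let $G$ be a graph and $u,v$ vertices with $d(u,v) \geq 3$, and let the sets $A_k, B_k$ ($k \ge 1$) be defined as in the context. Then for every $k \geq 1$, every vertex $x \in A_k$ with $N(x) \cap N^k(u,v) = \emptyset$ is a witness of the non-edge $uv$, i.e. $|d(x,u) - d(x,v)| \geq 2$.
   Context: $d$ is the graph distance in $G$ and $N(X)$ is the set of neighbours of vertices in $X$ ($N(x)=N(\{x\})$). For $k\ge 1$, $N^k(u,v) = \{x \in V(G) : \min(d(u,x),d(v,x)) = k\}$. Define $A_1 = N^1(u,v)$, $B_1 = \emptyset$, and for $k \geq 2$: $\mathcal{B}^k_1 = N(B_{k-1})$; $\mathcal{B}^k_2 = N(\{x \in A_{k-1} : N(x) \cap N^{k-1}(u,v) \neq \emptyset\})$; $\mathcal{B}^k_3 = \{x \in N^k(u,v) : |N(x) \cap A_{k-1}| \geq 2\}$; $B_k = N^k(u,v) \cap (\mathcal{B}^k_1 \cup \mathcal{B}^k_2 \cup \mathcal{B}^k_3)$ and $A_k = N^k(u,v) \setminus B_k$. A vertex $s$ is a witness of the non-edge $uv$ if $|d(s,u)-d(s,v)| \ge 2$. *)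

theory Defs
  imports Main "HOL-Library.Extended_Nat"
begin

definition graph :: "'a set \<Rightarrow> ('a \<Rightarrow> 'a \<Rightarrow> bool) \<Rightarrow> bool" where
  "graph V E \<longleftrightarrow> finite V \<and> (\<forall>x y. E x y \<longrightarrow> x \<in> V \<and> y \<in> V)
      \<and> (\<forall>x y. E x y \<longrightarrow> E y x) \<and> (\<forall>x. \<not> E x x)"

inductive walk :: "('a \<Rightarrow> 'a \<Rightarrow> bool) \<Rightarrow> nat \<Rightarrow> 'a \<Rightarrow> 'a \<Rightarrow> bool" for E where
  walk0: "walk E 0 x x"
| walkS: "E x y \<Longrightarrow> walk E n y z \<Longrightarrow> walk E (Suc n) x z"

definition dist :: "('a \<Rightarrow> 'a \<Rightarrow> bool) \<Rightarrow> 'a \<Rightarrow> 'a \<Rightarrow> enat" where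
  "dist E x y = (if \<exists>n. walk E n x y then enat (LEAST n. walk E n x y) else \<infinity>)"

definition nbhd :: "'a set \<Rightarrow> ('a \<Rightarrow> 'a \<Rightarrow> bool) \<Rightarrow> 'a set \<Rightarrow> 'a set" where
  "nbhd V E X = {y \<in> V. \<exists>x\<in>X. E x y}"

definition Nk :: "'a set \<Rightarrow> ('a \<Rightarrow> 'a \<Rightarrow> bool) \<Rightarrow> 'a \<Rightarrow> 'a \<Rightarrow> nat \<Rightarrow> 'a set" where
  "Nk V E u v k = {x \<in> V. min (dist E u x) (dist E v x) = enat k}"

text \<open>ABrec V E u v j = (A_{j+1}, B_{j+1}).\<close>
primrec ABrec :: "'a set \<Rightarrow> ('a \<Rightarrow> 'a \<Rightarrow> bool) \<Rightarrow> 'a \<Rightarrow> 'a \<Rightarrow> nat \<Rightarrow> 'a set \<times> 'a set" where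
  "ABrec V E u v 0 = (Nk V E u v 1, {})"
| "ABrec V E u v (Suc j) =
     (let Ap = fst (ABrec V E u v j); Bp = snd (ABrec V E u v j);
          k = Suc (Suc j);
          B1 = nbhd V E Bp;
          B2 = nbhd V E {x \<in> Ap. nbhd V E {x} \<inter> Nk V E u v (k - 1) \<noteq> {}};
          B3 = {x \<in> Nk V E u v k. card (nbhd V E {x} \<inter> Ap) \<ge> 2};
          B = Nk V E u v k \<inter> (B1 \<union> B2 \<union> B3)
      in (Nk V E u v k - B, B))"

definition Aset :: "'a set \<Rightarrow> ('a \<Rightarrow> 'a \<Rightarrow> bool) \<Rightarrow> 'a \<Rightarrow> 'a \<Rightarrow> nat \<Rightarrow> 'a set" where
  "Aset V E u v k = fst (ABrec V E u v (k - 1))"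

definition Bset :: "'a set \<Rightarrow> ('a \<Rightarrow> 'a \<Rightarrow> bool) \<Rightarrow> 'a \<Rightarrow> 'a \<Rightarrow> nat \<Rightarrow> 'a set" where
  "Bset V E u v k = snd (ABrec V E u v (k - 1))"

definition witness :: "('a \<Rightarrow> 'a \<Rightarrow> bool) \<Rightarrow> 'a \<Rightarrow> 'a \<Rightarrow> 'a \<Rightarrow> bool" where
  "witness E u v s \<longleftrightarrow> dist E s u + 2 \<le> dist E s v \<or> dist E s v + 2 \<le> dist E s u"

end

theory Submission
  imports Defs
begin

text \<open>
  First, no vertex of \<open>A\<^sub>k\<close> is equidistant from \<open>u\<close> and \<open>v\<close>: such a vertex would have a
  neighbour on a shortest path to \<open>u\<close> and one on a shortest path to \<open>v\<close>, both in layer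
  \<open>k - 1\<close> and hence (not being in \<open>B\<^sub>k\<close> via \<open>\<B>\<^sub>1\<close>) in \<open>A\<^sub>k\<^sub>-\<^sub>1\<close>; by \<open>\<B>\<^sub>3\<close> they coincide,
  giving an equidistant vertex of \<open>A\<^sub>k\<^sub>-\<^sub>1\<close>, and at \<open>k = 1\<close> a path \<open>u x v\<close> contradicts
  \<open>d(u,v) \<ge> 3\<close>.

  Now let \<open>x \<in> A\<^sub>k\<close> have no neighbour in its own layer and say \<open>d(u,x) = k\<close>. If \<open>x\<close> is
  not a witness then \<open>d(v,x) = k + 1\<close>, and the neighbour \<open>y\<close> of \<open>x\<close> on a shortest path to
  \<open>v\<close> lies outside layer \<open>k\<close>, forcing \<open>d(u,y) = k - 1\<close> and \<open>d(v,y) = k\<close>. Since \<open>x\<close> escapes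
  \<open>\<B>\<^sub>1\<close> and \<open>\<B>\<^sub>2\<close>, \<open>y \<in> A\<^sub>k\<^sub>-\<^sub>1\<close> and \<open>y\<close> has no neighbour in its own layer, so \<open>y\<close> is
  again a non-witness of the same kind; descending to \<open>k = 1\<close> gives \<open>y = u\<close> adjacent to
  \<open>v\<close>, a contradiction.
\<close>

lemma walk_snoc: "walk E n a x \<Longrightarrow> E x y \<Longrightarrow> walk E (Suc n) a y"
  by (induction rule: walk.induct) (auto intro: walk.intros)

lemma walk_0_iff: "walk E 0 a b \<longleftrightarrow> a = b"
  by (auto elim: walk.cases intro: walk0)

lemma walk_Suc_last: "walk E (Suc n) a x \<Longrightarrow> \<exists>y. walk E n a y \<and> E y x"
proof (induction n arbitrary: a)
  case 0
  then show ?case by (auto elim!: walk.cases intro: walk0)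
next
  case (Suc n)
  then obtain b where "E a b" "walk E (Suc n) b x" by (auto elim: walk.cases)
  with Suc.IH show ?case by (blast intro: walkS)
qed

lemma walk_sym:
  assumes "\<And>x y. E x y \<Longrightarrow> E y x"
  shows "walk E n a b \<Longrightarrow> walk E n b a"
  by (induction rule: walk.induct) (auto intro: walk0 walk_snoc assms)

lemma dist_le_walk: "walk E n a b \<Longrightarrow> dist E a b \<le> enat n"
  unfolding dist_def by (auto intro: Least_le)

lemma walk_dist: "dist E a b = enat n \<Longrightarrow> walk E n a b"
  unfolding dist_def by (auto split: if_splits intro: LeastI)

lemma dist_0_imp_eq: "dist E a b = 0 \<Longrightarrow> a = b"
  using walk_dist[of E a b 0] by (simp add: zero_enat_def walk_0_iff)

lemma dist_commute:
  assumes "\<And>x y. E x y \<Longrightarrow> E y x"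
  shows "dist E a b = dist E b a"
proof -
  have "(\<lambda>n. walk E n a b) = (\<lambda>n. walk E n b a)"
    using walk_sym[of E, OF assms] by blast
  then show ?thesis
    unfolding dist_def by (simp only:)
qed

lemma dist_neighbour_le: "E x y \<Longrightarrow> dist E a y \<le> dist E a x + 1"
proof (cases "dist E a x")
  case (enat m)
  assume "E x y"
  then have "walk E (Suc m) a y"
    by (rule walk_snoc[OF walk_dist[OF enat]])
  then have "dist E a y \<le> enat (Suc m)"
    by (rule dist_le_walk)
  then show ?thesis
    using enat by (simp add: one_enat_def)
qed simp

lemma dist_neighbour_ge:
  assumes "\<And>x y. E x y \<Longrightarrow> E y x" and "E y x" and "dist E a x = enat (Suc n)"
  shows "enat n \<le> dist E a y"
  using dist_neighbour_le[of E y x a] assms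
  by (cases "dist E a y") (auto simp: one_enat_def)

lemma dist_Suc_predecessor:
  assumes "dist E a x = enat (Suc n)"
  shows "\<exists>y. E y x \<and> dist E a y = enat n"
proof -
  obtain y where y: "walk E n a y" "E y x"
    using walk_Suc_last[OF walk_dist[OF assms]] by blast
  have "dist E a y \<le> enat n"
    using dist_le_walk[OF y(1)] .
  moreover have "dist E a x \<le> dist E a y + 1"
    using dist_neighbour_le[of E y x a, OF y(2)] .
  ultimately have "dist E a y = enat n"
    using assms by (cases "dist E a y") (auto simp: one_enat_def)
  with y show ?thesis by blast
qed

lemma graph_sym: "graph V E \<Longrightarrow> E x y \<Longrightarrow> E y x"
  unfolding graph_def by blast

lemma graph_in_V: "graph V E \<Longrightarrow> E x y \<Longrightarrow> x \<in> V \<and> y \<in> V"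
  unfolding graph_def by blast

lemma Nk_in_V: "x \<in> Nk V E u v k \<Longrightarrow> x \<in> V"
  by (simp add: Nk_def)

lemma Nk_commute: "Nk V E v u k = Nk V E u v k"
  by (auto simp: Nk_def min.commute)

lemma Aset_commute: "Aset V E v u k = Aset V E u v k"
proof -
  have "ABrec V E v u i = ABrec V E u v i" for i
    by (induction i) (simp_all add: Let_def Nk_commute)
  then show ?thesis
    by (simp add: Aset_def)
qed

lemma Aset_Un_Bset: "Aset V E u v (Suc k) \<union> Bset V E u v (Suc k) = Nk V E u v (Suc k)"
  by (cases k) (auto simp: Aset_def Bset_def Let_def)

lemma Aset_subset_Nk: "Aset V E u v (Suc k) \<subseteq> Nk V E u v (Suc k)"
  using Aset_Un_Bset[of V E u v k] by blast

lemma Aset_in_V: "x \<in> Aset V E u v (Suc k) \<Longrightarrow> x \<in> V"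
  using Aset_subset_Nk Nk_in_V by fast

lemma mem_Aset_Suc_Suc:
  "x \<in> Aset V E u v (Suc (Suc k)) \<longleftrightarrow>
     x \<in> Nk V E u v (Suc (Suc k))
     \<and> x \<notin> nbhd V E (Bset V E u v (Suc k))
     \<and> x \<notin> nbhd V E {y \<in> Aset V E u v (Suc k). nbhd V E {y} \<inter> Nk V E u v (Suc k) \<noteq> {}}
     \<and> card (nbhd V E {x} \<inter> Aset V E u v (Suc k)) < 2"
  by (auto simp: Aset_def Bset_def Let_def)

lemma Aset_neighbour_in_Aset:
  assumes "x \<in> Aset V E u v (Suc (Suc k))" and "E y x" and "y \<in> Nk V E u v (Suc k)"
  shows "y \<in> Aset V E u v (Suc k)"
proof -
  have "x \<notin> nbhd V E (Bset V E u v (Suc k))"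
    using assms(1) by (simp add: mem_Aset_Suc_Suc)
  then have "y \<notin> Bset V E u v (Suc k)"
    using assms(2) Aset_in_V[OF assms(1)] by (auto simp: nbhd_def)
  with assms(3) show ?thesis
    using Aset_Un_Bset[of V E u v k] by blast
qed

lemma Aset_neighbour_isolated:
  assumes "x \<in> Aset V E u v (Suc (Suc k))" and "E y x" and "y \<in> Aset V E u v (Suc k)"
  shows "nbhd V E {y} \<inter> Nk V E u v (Suc k) = {}"
proof -
  have "x \<notin> nbhd V E {y \<in> Aset V E u v (Suc k). nbhd V E {y} \<inter> Nk V E u v (Suc k) \<noteq> {}}"
    using assms(1) by (simp add: mem_Aset_Suc_Suc)
  then show ?thesis
    using assms(2,3) Aset_in_V[OF assms(1)] by (auto simp: nbhd_def)
qed

lemma Aset_unique_neighbour_in_Aset: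
  assumes "graph V E" and "x \<in> Aset V E u v (Suc (Suc k))"
    and "E x a" "a \<in> Aset V E u v (Suc k)" and "E x b" "b \<in> Aset V E u v (Suc k)"
  shows "a = b"
proof (rule ccontr)
  assume "a \<noteq> b"
  have "{a, b} \<subseteq> nbhd V E {x} \<inter> Aset V E u v (Suc k)"
    using assms graph_in_V[OF \<open>graph V E\<close>] by (auto simp: nbhd_def)
  moreover have "finite (nbhd V E {x})"
    using \<open>graph V E\<close> by (auto simp: graph_def nbhd_def)
  ultimately have "card {a, b} \<le> card (nbhd V E {x} \<inter> Aset V E u v (Suc k))"
    by (meson card_mono finite_Int)
  with \<open>a \<noteq> b\<close> assms(2) show False
    unfolding mem_Aset_Suc_Suc by simp
qed

lemma Aset_not_equidistant:
  assumes g: "graph V E" and d3: "3 \<le> dist E u v"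
  shows "x \<in> Aset V E u v (Suc k) \<Longrightarrow>
    \<not> (dist E u x = enat (Suc k) \<and> dist E v x = enat (Suc k))"
proof (induction k arbitrary: x)
  case 0
  show ?case
  proof
    assume eq: "dist E u x = enat (Suc 0) \<and> dist E v x = enat (Suc 0)"
    obtain a b where "E a x" "dist E u a = 0" "E b x" "dist E v b = 0"
      using eq dist_Suc_predecessor[of E u x 0] dist_Suc_predecessor[of E v x 0]
      by (auto simp: zero_enat_def)
    then have "E u x" "E x v"
      using dist_0_imp_eq graph_sym[OF g] by metis+
    then have "dist E u v \<le> enat (Suc (Suc 0))"
      by (blast intro: dist_le_walk walkS walk0)
    with d3 have "(3::enat) \<le> enat (Suc (Suc 0))"
      by (rule order_trans)
    then show False
      by (simp add: numeral_eq_enat)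
  qed
next
  case (Suc k)
  note sym = graph_sym[OF g]
  show ?case
  proof
    assume eq: "dist E u x = enat (Suc (Suc k)) \<and> dist E v x = enat (Suc (Suc k))"
    obtain a b where a: "E a x" "dist E u a = enat (Suc k)"
      and b: "E b x" "dist E v b = enat (Suc k)"
      using eq dist_Suc_predecessor by metis
    have "enat (Suc k) \<le> dist E v a" "enat (Suc k) \<le> dist E u b"
      using eq dist_neighbour_ge[of E, OF sym a(1)] dist_neighbour_ge[of E, OF sym b(1)] by auto
    then have "a \<in> Nk V E u v (Suc k)" "b \<in> Nk V E u v (Suc k)"
      using a b graph_in_V[OF g] by (auto simp: Nk_def min_def)
    then have "a \<in> Aset V E u v (Suc k)" "b \<in> Aset V E u v (Suc k)"
      using Aset_neighbour_in_Aset[OF Suc.prems] a(1) b(1) by blast+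
    moreover have "a = b"
      using Aset_unique_neighbour_in_Aset[OF g Suc.prems sym[OF a(1)] _ sym[OF b(1)]] calculation .
    ultimately show False
      using Suc.IH a b by simp
  qed
qed

lemma isolated_vertex_predecessor:
  assumes g: "graph V E" and isolated: "nbhd V E {x} \<inter> Nk V E u v (Suc k) = {}"
    and du: "dist E u x = enat (Suc k)" and dv: "dist E v x = enat (Suc (Suc k))"
  shows "\<exists>y. E y x \<and> dist E u y = enat k \<and> dist E v y = enat (Suc k)"
proof -
  obtain y where y: "E y x" "dist E v y = enat (Suc k)"
    using dist_Suc_predecessor[OF dv] by blast
  have "enat k \<le> dist E u y"
    using dist_neighbour_ge[OF graph_sym[OF g] y(1) du] .
  moreover have "y \<notin> Nk V E u v (Suc k)"
    using isolated y(1) graph_in_V[OF g y(1)] graph_sym[OF g y(1)] by (auto simp: nbhd_def)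
  then have "\<not> enat (Suc k) \<le> dist E u y"
    using y graph_in_V[OF g y(1)] by (auto simp: Nk_def min_absorb2)
  ultimately have "dist E u y = enat k"
    by (cases "dist E u y") auto
  with y show ?thesis by blast
qed

lemma Aset_non_witness_dist:
  assumes "graph V E" and "3 \<le> dist E u v" and "x \<in> Aset V E u v (Suc k)"
    and du: "dist E u x = enat (Suc k)" and "\<not> dist E u x + 2 \<le> dist E v x"
  shows "dist E v x = enat (Suc (Suc k))"
proof -
  have "enat (Suc k) \<le> dist E v x"
    using assms(3) Aset_subset_Nk du by (fastforce simp: Nk_def min_def split: if_splits)
  moreover have "dist E v x \<noteq> enat (Suc k)"
    using Aset_not_equidistant[OF assms(1-3)] du by blast
  ultimately show ?thesis
    using assms(5) du by (cases "dist E v x") (auto simp: numeral_eq_enat)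
qed

lemma isolated_Aset_far_from_v:
  assumes g: "graph V E" and d3: "3 \<le> dist E u v"
  shows "x \<in> Aset V E u v (Suc k) \<Longrightarrow> nbhd V E {x} \<inter> Nk V E u v (Suc k) = {} \<Longrightarrow>
    dist E u x = enat (Suc k) \<Longrightarrow> dist E u x + 2 \<le> dist E v x"
proof (induction k arbitrary: x)
  case 0
  show ?case
  proof (rule ccontr)
    assume "\<not> ?thesis"
    then have "dist E v x = enat 2"
      using Aset_non_witness_dist[OF g d3 "0.prems"(1,3)] by (simp add: numeral_2_eq_2)
    then obtain y where "E y x" "dist E u y = 0" "dist E v y = enat 1"
      using isolated_vertex_predecessor[OF g "0.prems"(2,3)]
      by (auto simp: zero_enat_def numeral_2_eq_2)
    then have "dist E u v = enat 1"
      using dist_0_imp_eq dist_commute[of E, OF graph_sym[OF g]] by metis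
    with d3 show False
      by (simp add: numeral_eq_enat)
  qed
next
  case (Suc k)
  show ?case
  proof (rule ccontr)
    assume "\<not> ?thesis"
    then have "dist E v x = enat (Suc (Suc (Suc k)))"
      using Aset_non_witness_dist[OF g d3 Suc.prems(1,3)] by simp
    then obtain y where y: "E y x" "dist E u y = enat (Suc k)" "dist E v y = enat (Suc (Suc k))"
      using isolated_vertex_predecessor[OF g Suc.prems(2,3)] by blast
    then have "y \<in> Nk V E u v (Suc k)"
      using graph_in_V[OF g y(1)] by (simp add: Nk_def)
    then have "y \<in> Aset V E u v (Suc k)"
      using Aset_neighbour_in_Aset[OF Suc.prems(1) y(1)] by blast
    moreover have "nbhd V E {y} \<inter> Nk V E u v (Suc k) = {}"
      using Aset_neighbour_isolated[OF Suc.prems(1) y(1) calculation] .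
    ultimately have "enat (Suc (Suc (Suc k))) \<le> dist E v y"
      using Suc.IH y(2) by (simp add: numeral_eq_enat)
    with y(3) show False
      by simp
  qed
qed

theorem mainTheorem7:
  fixes V :: "'a set" and E :: "'a \<Rightarrow> 'a \<Rightarrow> bool" and u v x :: 'a and k :: nat
  assumes "graph V E" and "u \<in> V" and "v \<in> V"
    and "dist E u v \<ge> 3"
    and "k \<ge> 1"
    and "x \<in> Aset V E u v k"
    and "nbhd V E {x} \<inter> Nk V E u v k = {}"
  shows "witness E u v x"
proof -
  obtain i where k: "k = Suc i"
    using assms(5) by (cases k) auto
  have sym: "dist E a b = dist E b a" for a b
    using dist_commute[of E, OF graph_sym[OF assms(1)]] by blast
  have "dist E u x = enat k \<or> dist E v x = enat k"
    using assms(6) Aset_subset_Nk k by (fastforce simp: Nk_def min_def split: if_splits)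
  then show ?thesis
  proof
    assume "dist E u x = enat k"
    then show ?thesis
      using isolated_Aset_far_from_v[OF assms(1,4)] assms(6,7) k
      unfolding witness_def sym[of x u] sym[of x v] by blast
  next
    assume "dist E v x = enat k"
    moreover have "3 \<le> dist E v u"
      using assms(4) sym[of v u] by simp
    ultimately show ?thesis
      using isolated_Aset_far_from_v[of V E v u] assms(1,6,7) k
      unfolding witness_def sym[of x u] sym[of x v] by (simp add: Aset_commute Nk_commute)
  qed
qed

end
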